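(* Let $\mathbb{K}$ be a field of characteristic $p>0$, let $a_1,\dots,a_k\in\mathbb{K}$, and let $\alpha_1\le\dots\le\alpha_k$ and $\beta_1,\dots,\beta_k$ be nonnegative integers with $p>\max_j(\alpha_j+\beta_j)$. Let $P=\sum_{j=1}^k a_jX^{\alpha_j}(1+X)^{\beta_j}\in\mathbb{K}[X]$. If $P\neq0$, then \[\operatorname{val}(P)\le\max_{1\le j\le k}\left(\alpha_j+\binom{k+1-j}{2}\right).\]
   Context: For a nonzero polynomial $P$, $\operatorname{val}(P)$ is the largest integer $v$ such that $X^v$ divides $P$. *)

theory Defs
  imports "HOL-Computational_Algebra.Polynomial"
begin

text \<open>Valuation of a polynomial: the largest v such that X^v divides P (meaningful for P nonzero).\<close>
definition val :: "'a::comm_semiring_1 poly \<Rightarrow> nat" where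
  "val P = (GREATEST v. monom 1 v dvd P)"

end

(*
  Let \<theta> = X d/dX be the Euler operator; it multiplies X^n by n. For polynomials f_0, ..., f_{m-1}
  consider the matrix W = (\<theta>^i f_j). If the f_j are linearly independent and of degree below the
  characteristic p, then det W \<noteq> 0: column operations with constant coefficients make the orders
  of the f_j at 0 pairwise distinct, and then the lowest coefficient of det W is a Vandermonde
  determinant in these orders, which are distinct modulo p.

  For f_j = X^(\<alpha>_j) (1+X)^(\<beta>_j) one has (1+X)^i \<theta>^i f_j = f_j q_ij with deg q_ij \<le> i, so
  val (det W) \<le> \<Sigma> \<alpha>_j + (m choose 2). Replacing column t by P = \<Sigma> a_j f_j multiplies det W by a_t,
  while column j \<noteq> t stays divisible by X^(\<alpha>_j) and column t by X^(val P); hence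
  val P \<le> \<alpha>_t + (m choose 2). Members of the family that are combinations of the others are absorbed
  into the coefficients until the family is independent; then t is the first index with a_t \<noteq> 0.
*)

theory Submission
  imports Defs "Jordan_Normal_Form.Determinant" "Jordan_Normal_Form.Char_Poly"
begin

hide_const (open) Module.module.smult

section \<open>The Euler operator\<close>

definition euler_op :: "'a::idom poly \<Rightarrow> 'a poly" where
  "euler_op p = [:0, 1:] * pderiv p"

lemma coeff_euler_op: "coeff (euler_op p) n = of_nat n * coeff p n"
  by (cases n) (auto simp: euler_op_def coeff_pderiv)

lemma coeff_euler_op_iter: "coeff ((euler_op ^^ i) p) n = of_nat n ^ i * coeff p n"
  by (induction i) (simp_all add: coeff_euler_op)

lemma euler_op_iter_sum:
  "(euler_op ^^ i) (\<Sum>t\<in>T. smult (c t) (f t)) = (\<Sum>t\<in>T. smult (c t) ((euler_op ^^ i) (f t)))"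
  by (rule poly_eqI) (simp add: coeff_euler_op_iter coeff_sum sum_distrib_left algebra_simps)

lemma euler_op_iter_diff:
  "(euler_op ^^ i) (p - smult c q) = (euler_op ^^ i) p - smult c ((euler_op ^^ i) q)"
  by (rule poly_eqI) (simp add: coeff_euler_op_iter algebra_simps)

lemma monom_dvd_euler_op_iter: "monom 1 v dvd p \<Longrightarrow> monom 1 v dvd (euler_op ^^ i) p"
  by (simp add: monom_1_dvd_iff' coeff_euler_op_iter)

lemma degree_euler_op_le: "degree (euler_op p) \<le> degree p"
  by (rule degree_le) (simp add: coeff_euler_op coeff_eq_0)

lemma euler_op_mult: "euler_op (p * q) = euler_op p * q + p * euler_op q"
  by (simp add: euler_op_def pderiv_mult algebra_simps)

lemma euler_op_monom: "euler_op (monom 1 a) = smult (of_nat a) (monom 1 a)"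
  by (rule poly_eqI) (simp add: coeff_euler_op)

lemma euler_op_power_one_plus_X:
  "[:1, 1:] * euler_op ([:1, 1:] ^ n) = [:0, of_nat n:] * ([:1, 1:] ^ n :: 'a::idom poly)"
proof (induction n)
  case (Suc n)
  define h :: "'a poly" where "h = [:1, 1:]"
  have "h * euler_op (h ^ Suc n) = h * euler_op h * h ^ n + h * (h * euler_op (h ^ n))"
    by (simp add: euler_op_mult algebra_simps)
  also have "\<dots> = [:0, 1:] * h ^ Suc n + [:0, of_nat n:] * h ^ Suc n"
  proof -
    have "euler_op h = [:0, 1:]" by (simp add: h_def euler_op_def pderiv_pCons)
    with Suc[folded h_def] show ?thesis by (simp add: algebra_simps)
  qed
  also have "\<dots> = [:0, of_nat (Suc n):] * h ^ Suc n"
    by (simp add: smult_add_left flip: distrib_right)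
  finally show ?case by (simp add: h_def)
qed (simp add: euler_op_def)

lemma euler_op_monom_mult_power_one_plus_X:
  "[:1, 1:] * euler_op (monom 1 a * [:1, 1:] ^ b)
     = monom 1 a * [:1, 1:] ^ b * ([:of_nat a, of_nat (a + b):] :: 'a::idom poly)"
proof -
  define h :: "'a poly" where "h = [:1, 1:]"
  have "h * euler_op (monom 1 a * h ^ b) = monom 1 a * h ^ b * smult (of_nat a) h + monom 1 a * (h * euler_op (h ^ b))"
    by (simp add: euler_op_mult euler_op_monom algebra_simps)
  also have "h * euler_op (h ^ b) = [:0, of_nat b:] * h ^ b"
    unfolding h_def by (rule euler_op_power_one_plus_X)
  also have "monom 1 a * h ^ b * smult (of_nat a) h + monom 1 a * ([:0, of_nat b:] * h ^ b)
      = monom 1 a * h ^ b * (smult (of_nat a) h + [:0, of_nat b:])"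
    by (simp only: algebra_simps)
  also have "smult (of_nat a) h + [:0, of_nat b:] = [:of_nat a, of_nat (a + b):]"
    by (simp add: h_def)
  finally show ?thesis by (simp add: h_def)
qed

lemma power_one_plus_X_mult_euler_op_iter:
  fixes g r :: "'a::idom poly"
  assumes g: "[:1, 1:] * euler_op g = g * r" and deg_r: "degree r \<le> 1"
  shows "\<exists>q. degree q \<le> i \<and> [:1, 1:] ^ i * (euler_op ^^ i) g = g * q"
proof (induction i)
  case (Suc i)
  define h :: "'a poly" where "h = [:1, 1:]"
  define F where "F = (euler_op ^^ i) g"
  from Suc obtain q where deg_q: "degree q \<le> i" and q: "h ^ i * F = g * q"
    by (auto simp: h_def F_def)
  define q' where "q' = r * q + h * euler_op q - [:0, of_nat i:] * q"
  have "h ^ Suc i * euler_op F = h * euler_op (h ^ i * F) - (h * euler_op (h ^ i)) * F"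
    by (simp add: euler_op_mult algebra_simps)
  also have "h * euler_op (h ^ i) = [:0, of_nat i:] * h ^ i"
    unfolding h_def by (rule euler_op_power_one_plus_X)
  also have "h * euler_op (h ^ i * F) - [:0, of_nat i:] * h ^ i * F
      = h * euler_op (g * q) - [:0, of_nat i:] * (g * q)"
    by (simp only: q mult.assoc)
  also have "h * euler_op (g * q) = (h * euler_op g) * q + g * (h * euler_op q)"
    by (simp add: euler_op_mult algebra_simps)
  also have "h * euler_op g = g * r"
    unfolding h_def by (rule g)
  also have "g * r * q + g * (h * euler_op q) - [:0, of_nat i:] * (g * q) = g * q'"
    by (simp add: q'_def algebra_simps)
  finally have "h ^ Suc i * (euler_op ^^ Suc i) g = g * q'"
    by (simp add: F_def)
  moreover have "degree q' \<le> Suc i"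
  proof -
    have "degree (r * q) \<le> Suc i"
      using degree_mult_le[of r q] deg_r deg_q by simp
    moreover have "degree (h * euler_op q) \<le> Suc i"
      using degree_mult_le[of h "euler_op q"] degree_euler_op_le[of q] deg_q by (simp add: h_def)
    moreover have "degree ([:0, of_nat i:] * q) \<le> Suc i"
      using degree_mult_le[of "[:0, of_nat i:]" q] deg_q by (simp add: degree_pCons_le)
    ultimately show ?thesis
      unfolding q'_def by (intro degree_diff_le degree_add_le)
  qed
  ultimately show ?case by (auto simp: h_def)
qed (auto intro: exI[of _ 1])

section \<open>Determinants\<close>

lemma det_scale_rows_cols:
  fixes A :: "'a::comm_ring_1 mat"
  assumes A: "A \<in> carrier_mat n n"
  shows "det (mat n n (\<lambda>(i, j). r i * c j * A $$ (i, j))) = prod r {0..<n} * prod c {0..<n} * det A"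
proof -
  have B: "mat n n (\<lambda>(i, j). r i * c j * A $$ (i, j)) \<in> carrier_mat n n" by simp
  have "signof p * (\<Prod>i = 0..<n. r i * c (p i) * A $$ (i, p i))
      = prod r {0..<n} * prod c {0..<n} * (signof p * (\<Prod>i = 0..<n. A $$ (i, p i)))"
    if "p permutes {0..<n}" for p
  proof -
    have "(\<Prod>i = 0..<n. c (p i)) = prod c {0..<n}"
      using prod.permute[OF that, of c] by (simp add: comp_def)
    then show ?thesis by (simp add: prod.distrib algebra_simps)
  qed
  then show ?thesis
    unfolding det_def'[OF A] det_def'[OF B] by (simp add: sum_distrib_left)
qed

lemma prod_dvd_det_if_dvd_cols:
  fixes A :: "'a::comm_ring_1 mat"
  assumes A: "A \<in> carrier_mat n n"
    and dvd: "\<And>i j. i < n \<Longrightarrow> j < n \<Longrightarrow> c j dvd A $$ (i, j)"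
  shows "prod c {0..<n} dvd det A"
  unfolding det_def'[OF A]
proof (intro dvd_sum dvd_mult)
  fix p assume "p \<in> {p. p permutes {0..<n}}"
  then have p: "p permutes {0..<n}" by simp
  have "prod c {0..<n} = (\<Prod>i = 0..<n. c (p i))"
    using prod.permute[OF p, of c] by (simp add: comp_def)
  also have "\<dots> dvd (\<Prod>i = 0..<n. A $$ (i, p i))"
    using p by (intro prod_dvd_prod dvd) (auto simp: permutes_in_image)
  finally show "prod c {0..<n} dvd (\<Prod>i = 0..<n. A $$ (i, p i))" .
qed

lemma det_replace_col_lincomb:
  fixes A :: "'a::comm_ring_1 mat"
  assumes A: "A \<in> carrier_mat n n" and k: "k < n"
  shows "det (mat n n (\<lambda>(i, j). if j = k then \<Sum>l = 0..<n. c l * A $$ (i, l) else A $$ (i, j)))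
    = c k * det A"
proof -
  define B where "B T = mat n n (\<lambda>(i, j).
    if j = k then c k * A $$ (i, k) + (\<Sum>l\<in>T. c l * A $$ (i, l)) else A $$ (i, j))" for T
  have B_carrier: "B T \<in> carrier_mat n n" for T by (simp add: B_def)
  have "det (B T) = c k * det A" if "finite T" "T \<subseteq> {0..<n} - {k}" for T
    using that
  proof (induction T rule: finite_induct)
    case empty
    have "B {} = A * multrow_mat n k (c k)"
      unfolding multcol_mat[OF A, symmetric] by (rule eq_matI) (use A in \<open>auto simp: B_def\<close>)
    then show ?case
      using A k by (simp add: det_mult det_multrow_mat)
  next
    case (insert l T)
    then have l: "l < n" "l \<noteq> k" by auto
    have "B (insert l T) = addcol (c l) k l (B T)"
      by (rule eq_matI) (use A l insert in \<open>auto simp: B_def algebra_simps\<close>)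
    with insert l B_carrier show ?case by simp
  qed
  moreover have "mat n n (\<lambda>(i, j). if j = k then \<Sum>l = 0..<n. c l * A $$ (i, l) else A $$ (i, j))
      = B ({0..<n} - {k})"
    unfolding B_def by (rule eq_matI) (use k in \<open>auto simp: sum.remove[of "{0..<n}" k]\<close>)
  ultimately show ?thesis by simp
qed

lemma degree_det_le_sum_rows:
  fixes A :: "'a::comm_ring_1 poly mat"
  assumes A: "A \<in> carrier_mat n n"
    and deg: "\<And>i j. i < n \<Longrightarrow> j < n \<Longrightarrow> degree (A $$ (i, j)) \<le> d i"
  shows "degree (det A) \<le> sum d {0..<n}"
  unfolding det_def'[OF A]
proof (rule degree_sum_le)
  fix p assume "p \<in> {p. p permutes {0..<n}}"
  then have p: "p permutes {0..<n}" by simp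
  have "degree (signof p * (\<Prod>i = 0..<n. A $$ (i, p i))) \<le> degree (\<Prod>i = 0..<n. A $$ (i, p i))"
    by (simp add: sign_def)
  also have "\<dots> \<le> (\<Sum>i = 0..<n. degree (A $$ (i, p i)))"
    using degree_prod_sum_le[of "{0..<n}" "\<lambda>i. A $$ (i, p i)"] by (simp add: comp_def)
  also have "\<dots> \<le> sum d {0..<n}"
    using p by (intro sum_mono deg) (auto simp: permutes_in_image)
  finally show "degree (signof p * (\<Prod>i = 0..<n. A $$ (i, p i))) \<le> sum d {0..<n}" .
qed (simp add: finite_permutations)

lemma det_vandermonde_nonzero:
  fixes x :: "nat \<Rightarrow> 'a::field"
  assumes inj: "inj_on x {0..<n}"
  shows "det (mat n n (\<lambda>(i, j). x j ^ i)) \<noteq> 0"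
proof
  define V where "V = mat n n (\<lambda>(i, j). x j ^ i)"
  assume "det (mat n n (\<lambda>(i, j). x j ^ i)) = 0"
  then have "det (transpose_mat V) = 0"
    unfolding V_def by (subst det_transpose) auto
  then obtain y where y: "y \<in> carrier_vec n" "y \<noteq> 0\<^sub>v n" "transpose_mat V *\<^sub>v y = 0\<^sub>v n"
    using det_0_iff_vec_prod_zero_field[of "transpose_mat V" n] unfolding V_def by auto
  define q where "q = (\<Sum>i<n. monom (y $ i) i)"
  have coeff_q: "coeff q t = (if t < n then y $ t else 0)" for t
    unfolding q_def coeff_sum coeff_monom by (auto simp: sum.delta)
  have root: "poly q (x j) = 0" if "j < n" for j
  proof -
    have "(transpose_mat V *\<^sub>v y) $ j = 0" using y(3) that by simp
    then show ?thesis
      using that y(1) by (simp add: V_def q_def poly_sum poly_monom mult_mat_vec_def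
          scalar_prod_def atLeast0LessThan mult.commute)
  qed
  have card: "card (x ` {0..<n}) = n" and n: "n > 0"
    using inj y(1,2) by (auto simp: card_image intro: Nat.gr0I)
  have "q = 0"
  proof (rule poly_eqI_degree[of "x ` {0..<n}"])
    show "degree q < card (x ` {0..<n})"
      using n by (auto simp: card coeff_q intro!: degree_lessI)
  qed (use root card n in auto)
  then have "y $ t = 0" if "t < n" for t
    using coeff_q[of t] that by simp
  then have "y = 0\<^sub>v n"
    using y(1) by (intro eq_vecI) auto
  with y(2) show False by simp
qed

section \<open>Order at zero\<close>

lemma coeff_less_order0: "n < order 0 p \<Longrightarrow> coeff p n = 0"
  using monom_1_dvd_iff[of p "order 0 p"] monom_1_dvd_iff'[of "order 0 p" p] by (cases "p = 0") auto

lemma coeff_order0_nonzero: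
  assumes "p \<noteq> 0" shows "coeff p (order 0 p) \<noteq> 0"
proof
  assume "coeff p (order 0 p) = 0"
  then have "monom 1 (Suc (order 0 p)) dvd p"
    by (auto simp: monom_1_dvd_iff' less_Suc_eq coeff_less_order0)
  with assms show False by (simp add: monom_1_dvd_iff)
qed

lemma order0_monom_mult: "q \<noteq> 0 \<Longrightarrow> order 0 (monom 1 n * q) = n + order 0 q"
  by (simp add: order_mult)

lemma order0_power_one_plus_X_mult:
  fixes q :: "'a::idom poly"
  assumes "q \<noteq> 0" shows "order 0 ([:1, 1:] ^ n * q) = order 0 q"
proof -
  have "poly ([:1, 1:] ^ n) 0 = (1 :: 'a)" by (simp add: poly_power)
  then have "[:1, 1:] ^ n \<noteq> (0 :: 'a poly)" and "order 0 ([:1, 1:] ^ n :: 'a poly) = 0"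
    by (auto intro: order_0I)
  with assms show ?thesis by (simp add: order_mult)
qed

lemma order0_diff_smult_gt:
  fixes p q :: "'a::field poly"
  assumes "q \<noteq> 0" "order 0 p = v" "order 0 q = v"
    and nonzero: "p - smult (coeff p v / coeff q v) q \<noteq> 0"
  shows "v < order 0 (p - smult (coeff p v / coeff q v) q)"
proof -
  have cq: "coeff q v \<noteq> 0"
    using coeff_order0_nonzero[OF assms(1)] assms(3) by simp
  have "coeff (p - smult (coeff p v / coeff q v) q) n = 0" if "n \<le> v" for n
  proof (cases "n = v")
    case True
    with cq show ?thesis by simp
  next
    case False
    with that assms(2,3) have "n < order 0 p" "n < order 0 q" by auto
    then show ?thesis by (simp add: coeff_less_order0)
  qed
  then have "monom 1 (Suc v) dvd p - smult (coeff p v / coeff q v) q"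
    unfolding monom_1_dvd_iff' less_Suc_eq_le by blast
  with nonzero show ?thesis
    by (simp add: monom_1_dvd_iff)
qed

lemma prod_monom_1: "(\<Prod>j\<in>S. monom (1 :: 'a::comm_semiring_1) (w j)) = monom 1 (\<Sum>j\<in>S. w j)"
  by (simp add: monom_altdef power_sum)

lemma sum_atLeast0LessThan_eq_choose_2: "(\<Sum>i = 0..<m. i) = m choose 2"
  by (simp add: Sum_Ico_nat choose_two)

lemma val_eq_order0: "P \<noteq> 0 \<Longrightarrow> val P = order 0 P"
  unfolding val_def by (rule Greatest_equality) (simp_all add: monom_1_dvd_iff)

lemma inj_on_of_nat_lessThan_CHAR: "inj_on (of_nat :: nat \<Rightarrow> 'a::ring_1) {..<CHAR('a)}"
proof -
  have "x = y" if "x \<le> y" "y < CHAR('a)" "of_nat x = (of_nat y :: 'a)" for x y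
  proof -
    have "of_nat (y - x) = (0 :: 'a)" using that by (simp add: of_nat_diff)
    then have "CHAR('a) dvd y - x" by (simp add: of_nat_eq_0_iff_char_dvd)
    with that show ?thesis by (auto dest: dvd_imp_le)
  qed
  then show ?thesis
    by (intro inj_onI) (metis lessThan_iff nat_le_linear)
qed

section \<open>Linear independence of polynomials\<close>

definition lin_indep_on :: "('b \<Rightarrow> 'a::field poly) \<Rightarrow> 'b set \<Rightarrow> bool" where
  "lin_indep_on f S \<longleftrightarrow> (\<forall>c. (\<Sum>j\<in>S. smult (c j) (f j)) = 0 \<longrightarrow> (\<forall>j\<in>S. c j = 0))"

lemma lin_indep_onD:
  "lin_indep_on f S \<Longrightarrow> (\<Sum>j\<in>S. smult (c j) (f j)) = 0 \<Longrightarrow> j \<in> S \<Longrightarrow> c j = 0"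
  unfolding lin_indep_on_def by blast

lemma lin_indep_on_nonzero:
  assumes "lin_indep_on f S" "j \<in> S" shows "f j \<noteq> 0"
proof
  assume "f j = 0"
  then have "(\<Sum>i\<in>S. smult (if i = j then 1 else 0) (f i)) = 0"
    by (intro sum.neutral) auto
  from lin_indep_onD[OF assms(1) this assms(2)] show False by simp
qed

lemma lin_indep_on_subset:
  assumes "lin_indep_on f S" "T \<subseteq> S" "finite S"
  shows "lin_indep_on f T"
  unfolding lin_indep_on_def
proof (intro allI impI)
  fix c assume "(\<Sum>j\<in>T. smult (c j) (f j)) = 0"
  moreover have "(\<Sum>j\<in>S. smult (if j \<in> T then c j else 0) (f j)) = (\<Sum>j\<in>T. smult (c j) (f j))"
    using assms(2,3) by (intro sum.mono_neutral_cong_right) auto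
  ultimately have "(\<Sum>j\<in>S. smult (if j \<in> T then c j else 0) (f j)) = 0" by simp
  then have "(if j \<in> T then c j else 0) = 0" if "j \<in> T" for j
    by (rule lin_indep_onD[OF assms(1)]) (use assms(2) that in blast)
  then show "\<forall>j\<in>T. c j = 0" by simp
qed

lemma lin_indep_on_reindex:
  assumes "lin_indep_on f S" "bij_betw e T S"
  shows "lin_indep_on (f \<circ> e) T"
  unfolding lin_indep_on_def
proof (intro allI impI)
  fix c assume "(\<Sum>t\<in>T. smult (c t) ((f \<circ> e) t)) = 0"
  then have "(\<Sum>j\<in>S. smult (c (inv_into T e j)) (f j)) = 0"
    using assms(2) by (simp add: sum.reindex_bij_betw[OF assms(2), symmetric] bij_betw_inv_into_left)
  then have "c (inv_into T e (e t)) = 0" if "t \<in> T" for t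
    by (rule lin_indep_onD[OF assms(1)]) (use bij_betwE[OF assms(2)] that in blast)
  then show "\<forall>t\<in>T. c t = 0"
    using bij_betw_inv_into_left[OF assms(2)] by simp
qed

lemma lin_indep_on_update:
  assumes ind: "lin_indep_on f S" and S: "finite S" "s \<in> S" "t \<in> S" "s \<noteq> t"
  shows "lin_indep_on (f(t := f t - smult c (f s))) S"
  unfolding lin_indep_on_def
proof (intro allI impI)
  fix d assume rel: "(\<Sum>j\<in>S. smult (d j) ((f(t := f t - smult c (f s))) j)) = 0"
  define d' where "d' = d(s := d s - d t * c)"
  have "(\<Sum>j\<in>S. smult (d j) ((f(t := f t - smult c (f s))) j))
      = (\<Sum>j\<in>S. smult (d j) (f j) - (if j = t then smult (d t * c) (f s) else 0))"
    by (intro sum.cong) (auto simp: smult_diff_right)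
  also have "\<dots> = (\<Sum>j\<in>S. smult (d j) (f j)) - smult (d t * c) (f s)"
    using S by (simp add: sum_subtractf)
  also have "\<dots> = (\<Sum>j\<in>S. smult (d j) (f j) - (if j = s then smult (d t * c) (f s) else 0))"
    using S by (simp add: sum_subtractf)
  also have "\<dots> = (\<Sum>j\<in>S. smult (d' j) (f j))"
    by (intro sum.cong) (auto simp: d'_def smult_diff_left)
  finally have "(\<Sum>j\<in>S. smult (d' j) (f j)) = 0"
    using rel by simp
  then have d': "d' j = 0" if "j \<in> S" for j
    by (rule lin_indep_onD[OF ind _ that])
  then have "d j = 0" if "j \<in> S" "j \<noteq> s" for j
    using d'[of j] that by (simp add: d'_def)
  moreover from this have "d s = 0"
    using d'[of s] S(2-4) by (auto simp: d'_def)
  ultimately show "\<forall>j\<in>S. d j = 0" by blast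
qed

lemma not_lin_indep_onE:
  assumes "\<not> lin_indep_on f S" "finite S"
  obtains j c where "j \<in> S" "f j = (\<Sum>i\<in>S - {j}. smult (c i) (f i))"
proof -
  from assms obtain d j where j: "j \<in> S" "d j \<noteq> 0" and rel: "(\<Sum>i\<in>S. smult (d i) (f i)) = 0"
    unfolding lin_indep_on_def by blast
  have "smult (d j) (f j) = - (\<Sum>i\<in>S - {j}. smult (d i) (f i))"
    using rel assms(2) j(1) by (simp add: sum.remove eq_neg_iff_add_eq_0)
  then have "f j = smult (inverse (d j)) (- (\<Sum>i\<in>S - {j}. smult (d i) (f i)))"
    using j(2) by (metis smult_smult left_inverse smult_1_left)
  also have "\<dots> = (\<Sum>i\<in>S - {j}. smult (- d i / d j) (f i))"
    by (simp add: smult_sum2 divide_inverse mult.commute sum_negf)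
  finally show thesis by (rule that[OF j(1)])
qed

lemma sum_smult_eliminate:
  assumes "finite S" "j1 \<in> S" "g j1 = (\<Sum>i\<in>S - {j1}. smult (c i) (g i))"
  shows "(\<Sum>j\<in>S. smult (a j) (g j)) = (\<Sum>j\<in>S - {j1}. smult (a j + a j1 * c j) (g j))"
proof -
  have "(\<Sum>j\<in>S. smult (a j) (g j)) = smult (a j1) (g j1) + (\<Sum>j\<in>S - {j1}. smult (a j) (g j))"
    using assms(1,2) by (simp add: sum.remove)
  also have "smult (a j1) (g j1) = (\<Sum>j\<in>S - {j1}. smult (a j1 * c j) (g j))"
    by (simp add: assms(3) smult_sum2)
  also have "(\<Sum>j\<in>S - {j1}. smult (a j1 * c j) (g j)) + (\<Sum>j\<in>S - {j1}. smult (a j) (g j))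
      = (\<Sum>j\<in>S - {j1}. smult (a j + a j1 * c j) (g j))"
    unfolding smult_add_left sum.distrib by (rule add.commute)
  finally show ?thesis .
qed

section \<open>The Euler--Wronski determinant\<close>

definition euler_wronskian :: "(nat \<Rightarrow> 'a::idom poly) \<Rightarrow> nat \<Rightarrow> 'a poly mat" where
  "euler_wronskian f m = mat m m (\<lambda>(i, j). (euler_op ^^ i) (f j))"

lemma euler_wronskian_carrier [simp]: "euler_wronskian f m \<in> carrier_mat m m"
  by (simp add: euler_wronskian_def)

lemma euler_wronskian_index [simp]:
  "i < m \<Longrightarrow> j < m \<Longrightarrow> euler_wronskian f m $$ (i, j) = (euler_op ^^ i) (f j)"
  by (simp add: euler_wronskian_def)

lemma dim_euler_wronskian [simp]:
  "dim_row (euler_wronskian f m) = m" "dim_col (euler_wronskian f m) = m"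
  by (simp_all add: euler_wronskian_def)

lemma det_euler_wronskian_nonzero_if_distinct_orders:
  fixes f :: "nat \<Rightarrow> 'a::field poly"
  assumes nonzero: "\<And>j. j < m \<Longrightarrow> f j \<noteq> 0"
    and deg: "\<And>j. j < m \<Longrightarrow> degree (f j) < CHAR('a)"
    and distinct: "inj_on (\<lambda>j. order 0 (f j)) {0..<m}"
  shows "det (euler_wronskian f m) \<noteq> 0"
proof -
  \<comment> \<open>After dividing column j by X^(v j), evaluation at 0 gives a Vandermonde matrix.\<close>
  define v where "v j = order 0 (f j)" for j
  define Q where "Q = mat m m (\<lambda>(i, j). (euler_op ^^ i) (f j) div monom 1 (v j))"
  have Q_carrier: "Q \<in> carrier_mat m m"
    by (simp add: Q_def)
  have dvd: "monom 1 (v j) dvd (euler_op ^^ i) (f j)" if "j < m" for i j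
  proof (rule monom_dvd_euler_op_iter)
    show "monom 1 (v j) dvd f j"
      unfolding v_def using monom_1_dvd_iff[OF nonzero[OF that]] by blast
  qed
  have "euler_wronskian f m = mat m m (\<lambda>(i, j). 1 * monom 1 (v j) * Q $$ (i, j))"
    by (rule eq_matI) (auto simp: Q_def dvd)
  then have factor: "det (euler_wronskian f m) = (\<Prod>j = 0..<m. monom 1 (v j)) * det Q"
    using det_scale_rows_cols[of Q m "\<lambda>_. 1" "\<lambda>j. monom 1 (v j)"] by (simp add: Q_def)
  have Q_at_0: "poly (Q $$ (i, j)) 0 = 1 * coeff (f j) (v j) * of_nat (v j) ^ i"
    if ij: "i < m" "j < m" for i j
  proof -
    obtain r where r: "(euler_op ^^ i) (f j) = monom 1 (v j) * r"
      using dvd[OF ij(2)] by (auto elim: dvdE)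
    then have "Q $$ (i, j) = r"
      using ij by (simp add: Q_def)
    with arg_cong[OF r, of "\<lambda>p. coeff p (v j)"] show ?thesis
      by (simp add: poly_0_coeff_0 coeff_euler_op_iter coeff_monom_mult) (simp only: mult.commute)
  qed
  define V where "V = mat m m (\<lambda>(i, j). (of_nat (v j) :: 'a) ^ i)"
  have "poly (det Q) 0 = det (mat m m (\<lambda>(i, j). 1 * coeff (f j) (v j) * V $$ (i, j)))"
    by (rule poly_det_cong[OF _ Q_carrier]) (auto simp: Q_at_0 V_def)
  also have "\<dots> = (\<Prod>j = 0..<m. coeff (f j) (v j)) * det V"
    using det_scale_rows_cols[of V m "\<lambda>_. 1"] by (simp add: V_def)
  also have "\<dots> \<noteq> 0"
  proof -
    have "v j < CHAR('a)" if "j < m" for j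
      using order_degree[OF nonzero[OF that], of 0] deg[OF that] by (simp add: v_def)
    then have "inj_on (of_nat :: nat \<Rightarrow> 'a) (v ` {0..<m})"
      by (intro inj_on_subset[OF inj_on_of_nat_lessThan_CHAR]) auto
    moreover have "inj_on v {0..<m}"
      using distinct by (simp add: inj_on_def v_def)
    ultimately have "inj_on (\<lambda>j. of_nat (v j) :: 'a) {0..<m}"
      using comp_inj_on[of v "{0..<m}" of_nat] by (simp add: comp_def)
    then show ?thesis
      using coeff_order0_nonzero[OF nonzero]
      by (simp add: V_def det_vandermonde_nonzero v_def)
  qed
  finally show ?thesis
    using factor by auto
qed

lemma det_euler_wronskian_nonzero:
  fixes f :: "nat \<Rightarrow> 'a::field poly"
  assumes deg: "\<And>j. j < m \<Longrightarrow> degree (f j) < CHAR('a)"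
    and indep: "lin_indep_on f {0..<m}"
  shows "det (euler_wronskian f m) \<noteq> 0"
  using assms
  \<comment> \<open>Each column operation raises the order of one column, and orders stay below the characteristic.\<close>
proof (induction "\<Sum>j = 0..<m. CHAR('a) - order 0 (f j)" arbitrary: f rule: less_induct)
  case less
  have nonzero: "f j \<noteq> 0" if "j < m" for j
    using lin_indep_on_nonzero[OF less.prems(2)] that by simp
  show ?case
  proof (cases "inj_on (\<lambda>j. order 0 (f j)) {0..<m}")
    case True
    with nonzero less.prems(1) show ?thesis
      by (rule det_euler_wronskian_nonzero_if_distinct_orders)
  next
    case False
    then obtain s t where st: "s < m" "t < m" "s \<noteq> t" "order 0 (f s) = order 0 (f t)"
      unfolding inj_on_def by auto
    define c where "c = coeff (f t) (order 0 (f t)) / coeff (f s) (order 0 (f t))"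
    define f' where "f' = f(t := f t - smult c (f s))"
    have "euler_wronskian f' m = addcol (- [:c:]) t s (euler_wronskian f m)"
      by (rule eq_matI) (use st(1) in \<open>auto simp: f'_def euler_op_iter_diff\<close>)
    then have same_det: "det (euler_wronskian f' m) = det (euler_wronskian f m)"
      using st by simp
    have indep': "lin_indep_on f' {0..<m}"
      unfolding f'_def using less.prems(2) st by (intro lin_indep_on_update) auto
    have deg': "degree (f' j) < CHAR('a)" if "j < m" for j
      using less.prems(1)[OF that] less.prems(1)[OF st(1)] less.prems(1)[OF st(2)]
        degree_diff_le_max[of "f t" "smult c (f s)"] degree_smult_le[of c "f s"]
      by (auto simp: f'_def)
    have "order 0 (f t) < order 0 (f' t)"
      using order0_diff_smult_gt[OF nonzero[OF st(1)] refl st(4)]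
        lin_indep_on_nonzero[OF indep', of t] st(2)
      by (simp add: f'_def c_def)
    moreover have "order 0 (f' t) < CHAR('a)"
      using order_degree[OF lin_indep_on_nonzero[OF indep'], of t 0] deg'[OF st(2)] st(2) by simp
    ultimately have "(\<Sum>j = 0..<m. CHAR('a) - order 0 (f' j)) < (\<Sum>j = 0..<m. CHAR('a) - order 0 (f j))"
      using st(2) by (intro sum_strict_mono_ex1) (auto simp: f'_def)
    then have "det (euler_wronskian f' m) \<noteq> 0"
      by (rule less.hyps[OF _ deg' indep'])
    with same_det show ?thesis by simp
  qed
qed

lemma order0_det_euler_wronskian_le:
  fixes A B :: "nat \<Rightarrow> nat"
  defines "g \<equiv> \<lambda>j. monom (1 :: 'a::field) (A j) * [:1, 1:] ^ B j"
  assumes nonzero: "det (euler_wronskian g m) \<noteq> 0"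
  shows "order 0 (det (euler_wronskian g m)) \<le> (\<Sum>j = 0..<m. A j) + (m choose 2)"
proof -
  define h :: "'a poly" where "h = [:1, 1:]"
  define W where "W = euler_wronskian g m"
  have "\<exists>q. degree q \<le> i \<and> h ^ i * (euler_op ^^ i) (g j) = g j * q" for i j
    unfolding g_def h_def by (rule power_one_plus_X_mult_euler_op_iter[OF euler_op_monom_mult_power_one_plus_X]) simp
  then obtain Q where deg_Q: "\<And>i j. degree (Q i j) \<le> i"
    and Q: "\<And>i j. h ^ i * (euler_op ^^ i) (g j) = g j * Q i j"
    by metis
  define M where "M = mat m m (\<lambda>(i, j). Q i j)"
  have M_carrier: "M \<in> carrier_mat m m"
    by (simp add: M_def)
  have "(\<Prod>i = 0..<m. h ^ i) * det W = det (mat m m (\<lambda>(i, j). h ^ i * 1 * W $$ (i, j)))"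
    using det_scale_rows_cols[of W m "\<lambda>i. h ^ i" "\<lambda>_. 1"] by (simp add: W_def)
  also have "mat m m (\<lambda>(i, j). h ^ i * 1 * W $$ (i, j)) = mat m m (\<lambda>(i, j). 1 * g j * M $$ (i, j))"
    by (rule eq_matI) (auto simp: W_def M_def Q)
  also have "det \<dots> = (\<Prod>j = 0..<m. g j) * det M"
    using det_scale_rows_cols[OF M_carrier, of "\<lambda>_. 1" g] by simp
  also have "(\<Prod>j = 0..<m. g j) = monom 1 (\<Sum>j = 0..<m. A j) * h ^ (\<Sum>j = 0..<m. B j)"
    by (simp add: g_def h_def prod.distrib power_sum prod_monom_1)
  finally have factor: "h ^ (\<Sum>i = 0..<m. i) * det W = monom 1 (\<Sum>j = 0..<m. A j) * (h ^ (\<Sum>j = 0..<m. B j) * det M)"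
    by (simp add: power_sum mult.assoc)
  have "h \<noteq> 0" by (simp add: h_def)
  with nonzero factor have "det M \<noteq> 0"
    by (auto simp: W_def)
  have "order 0 (det W) = order 0 (h ^ (\<Sum>i = 0..<m. i) * det W)"
    using nonzero by (simp add: h_def W_def order0_power_one_plus_X_mult)
  also have "\<dots> = (\<Sum>j = 0..<m. A j) + order 0 (det M)"
    unfolding factor using \<open>det M \<noteq> 0\<close> \<open>h \<noteq> 0\<close>
    by (simp add: order0_monom_mult h_def order0_power_one_plus_X_mult)
  also have "order 0 (det M) \<le> degree (det M)"
    by (rule order_degree[OF \<open>det M \<noteq> 0\<close>])
  also have "degree (det M) \<le> (\<Sum>i = 0..<m. i)"
    by (rule degree_det_le_sum_rows[OF M_carrier]) (simp add: M_def deg_Q)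
  finally show ?thesis
    by (simp add: W_def sum_atLeast0LessThan_eq_choose_2)
qed

section \<open>The valuation bound\<close>

lemma order0_lincomb_le:
  fixes A B :: "nat \<Rightarrow> nat" and a :: "nat \<Rightarrow> 'a::field"
  defines "g \<equiv> \<lambda>j. monom 1 (A j) * [:1, 1:] ^ B j"
  assumes deg: "\<And>j. j < m \<Longrightarrow> A j + B j < CHAR('a)"
    and indep: "lin_indep_on g {0..<m}" and t: "t < m" "a t \<noteq> 0"
  shows "order 0 (\<Sum>j = 0..<m. smult (a j) (g j)) \<le> A t + (m choose 2)"
proof -
  define P where "P = (\<Sum>j = 0..<m. smult (a j) (g j))"
  define w where "w j = (if j = t then order 0 P else A j)" for j
  define W where "W = euler_wronskian g m"
  have P_nonzero: "P \<noteq> 0"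
    using lin_indep_onD[OF indep, of a t] t by (auto simp: P_def)
  have "degree (g j) < CHAR('a)" if "j < m" for j
    using deg[OF that] by (simp add: g_def degree_mult_eq degree_monom_eq degree_power_eq)
  then have W_nonzero: "det W \<noteq> 0"
    unfolding W_def using indep by (rule det_euler_wronskian_nonzero)
  have "euler_wronskian (g(t := P)) m
      = mat m m (\<lambda>(i, j). if j = t then \<Sum>l = 0..<m. [:a l:] * W $$ (i, l) else W $$ (i, j))"
    by (rule eq_matI) (auto simp: W_def P_def euler_op_iter_sum intro!: sum.cong)
  then have det_update: "det (euler_wronskian (g(t := P)) m) = smult (a t) (det W)"
    using det_replace_col_lincomb[of W m t "\<lambda>l. [:a l:]"] t(1) by (simp add: W_def)
  have "monom 1 (w j) dvd euler_wronskian (g(t := P)) m $$ (i, j)" if "i < m" "j < m" for i j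
  proof -
    have "monom 1 (w j) dvd (g(t := P)) j"
      using monom_1_dvd_iff[OF P_nonzero] by (simp add: w_def g_def)
    with that show ?thesis by (simp add: monom_dvd_euler_op_iter)
  qed
  then have "(\<Prod>j = 0..<m. monom 1 (w j)) dvd det (euler_wronskian (g(t := P)) m)"
    by (intro prod_dvd_det_if_dvd_cols) simp_all
  then have "monom 1 (\<Sum>j = 0..<m. w j) dvd det W"
    using t(2) by (simp add: det_update prod_monom_1 dvd_smult_iff)
  then have "(\<Sum>j = 0..<m. w j) \<le> order 0 (det W)"
    using monom_1_dvd_iff[OF W_nonzero] by simp
  also have "\<dots> \<le> (\<Sum>j = 0..<m. A j) + (m choose 2)"
    unfolding W_def g_def by (rule order0_det_euler_wronskian_le) (use W_nonzero in \<open>simp add: W_def g_def\<close>)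
  finally show ?thesis
    using t(1) by (simp add: P_def w_def sum.remove[of "{0..<m}" t])
qed

lemma order0_lincomb_le_finite:
  fixes \<alpha> \<beta> :: "'b \<Rightarrow> nat" and a :: "'b \<Rightarrow> 'a::field"
  defines "g \<equiv> \<lambda>j. monom 1 (\<alpha> j) * [:1, 1:] ^ \<beta> j"
  assumes U: "finite U" and deg: "\<And>j. j \<in> U \<Longrightarrow> \<alpha> j + \<beta> j < CHAR('a)"
    and indep: "lin_indep_on g U" and j0: "j0 \<in> U" "a j0 \<noteq> 0"
  shows "order 0 (\<Sum>j\<in>U. smult (a j) (g j)) \<le> \<alpha> j0 + (card U choose 2)"
proof -
  obtain e where e: "bij_betw e {0..<card U} U"
    using ex_bij_betw_nat_finite[OF U] by blast
  define t where "t = inv_into {0..<card U} e j0"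
  have t: "t < card U" "e t = j0"
    using bij_betwE[OF bij_betw_inv_into[OF e]] bij_betw_inv_into_right[OF e] j0(1)
    by (auto simp: t_def)
  have "order 0 (\<Sum>i = 0..<card U. smult (a (e i)) (g (e i))) \<le> \<alpha> (e t) + (card U choose 2)"
    using lin_indep_on_reindex[OF indep e] t j0(2) bij_betwE[OF e] deg
    unfolding g_def by (intro order0_lincomb_le) (auto simp: comp_def)
  moreover have "(\<Sum>j\<in>U. smult (a j) (g j)) = (\<Sum>i = 0..<card U. smult (a (e i)) (g (e i)))"
    by (rule sum.reindex_bij_betw[OF e, symmetric])
  ultimately show ?thesis
    by (simp add: t)
qed

lemma Max_tail_choose_2_mono:
  fixes \<alpha> :: "'b::linorder \<Rightarrow> nat"
  assumes "finite S" "T \<subseteq> S" "T \<noteq> {}"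
  shows "Max ((\<lambda>j. \<alpha> j + (card {i\<in>T. j \<le> i} choose 2)) ` T)
    \<le> Max ((\<lambda>j. \<alpha> j + (card {i\<in>S. j \<le> i} choose 2)) ` S)"
proof (rule Max.boundedI)
  show "finite ((\<lambda>j. \<alpha> j + (card {i\<in>T. j \<le> i} choose 2)) ` T)"
    using assms(1,2) finite_subset by blast
  show "(\<lambda>j. \<alpha> j + (card {i\<in>T. j \<le> i} choose 2)) ` T \<noteq> {}"
    using assms(3) by simp
next
  fix x assume "x \<in> (\<lambda>j. \<alpha> j + (card {i\<in>T. j \<le> i} choose 2)) ` T"
  then obtain j where j: "j \<in> T" and x: "x = \<alpha> j + (card {i\<in>T. j \<le> i} choose 2)"
    by blast
  have "card {i\<in>T. j \<le> i} \<le> card {i\<in>S. j \<le> i}"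
    using assms(1,2) by (intro card_mono) auto
  then have "x \<le> \<alpha> j + (card {i\<in>S. j \<le> i} choose 2)"
    unfolding x by (simp add: binomial_right_mono)
  also have "\<dots> \<le> Max ((\<lambda>j. \<alpha> j + (card {i\<in>S. j \<le> i} choose 2)) ` S)"
    using assms(1,2) j by (intro Max_ge) auto
  finally show "x \<le> Max ((\<lambda>j. \<alpha> j + (card {i\<in>S. j \<le> i} choose 2)) ` S)" .
qed

lemma order0_sum_le_Max:
  fixes \<alpha> \<beta> :: "'b::linorder \<Rightarrow> nat" and a :: "'b \<Rightarrow> 'a::field"
  defines "g \<equiv> \<lambda>j. monom 1 (\<alpha> j) * [:1, 1:] ^ \<beta> j"
  assumes "finite S" and "\<And>j. j \<in> S \<Longrightarrow> \<alpha> j + \<beta> j < CHAR('a)"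
    and "(\<Sum>j\<in>S. smult (a j) (g j)) \<noteq> 0"
  shows "order 0 (\<Sum>j\<in>S. smult (a j) (g j)) \<le> Max ((\<lambda>j. \<alpha> j + (card {i\<in>S. j \<le> i} choose 2)) ` S)"
  using assms(2-)
proof (induction "card S" arbitrary: S a rule: less_induct)
  case less
  note fin = less.prems(1) and deg = less.prems(2) and nonzero = less.prems(3)
  show ?case
  proof (cases "lin_indep_on g S")
    case True
    define j0 where "j0 = Min {j\<in>S. a j \<noteq> 0}"
    define U where "U = {i\<in>S. j0 \<le> i}"
    have "{j\<in>S. a j \<noteq> 0} \<noteq> {}"
      using nonzero by (auto intro: sum.neutral)
    then have j0: "j0 \<in> S" "a j0 \<noteq> 0"
      using fin Min_in[of "{j\<in>S. a j \<noteq> 0}"] by (auto simp: j0_def)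
    have below_j0: "a j = 0" if "j \<in> S" "j < j0" for j
    proof (rule ccontr)
      assume "a j \<noteq> 0"
      with fin that(1) have "j0 \<le> j" by (simp add: j0_def)
      with that(2) show False by simp
    qed
    have "(\<Sum>j\<in>S. smult (a j) (g j)) = (\<Sum>j\<in>U. smult (a j) (g j))"
      using fin below_j0 by (intro sum.mono_neutral_right) (auto simp: U_def not_le)
    also have "order 0 \<dots> \<le> \<alpha> j0 + (card U choose 2)"
      using fin deg j0 lin_indep_on_subset[OF True _ fin, of U]
      unfolding g_def by (intro order0_lincomb_le_finite) (auto simp: U_def)
    also have "\<dots> \<le> Max ((\<lambda>j. \<alpha> j + (card {i\<in>S. j \<le> i} choose 2)) ` S)"
      using fin j0(1) by (intro Max_ge) (auto simp: U_def)
    finally show ?thesis .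
  next
    case False
    then obtain j1 c where j1: "j1 \<in> S" and c: "g j1 = (\<Sum>i\<in>S - {j1}. smult (c i) (g i))"
      using fin by (rule not_lin_indep_onE)
    define S' where "S' = S - {j1}"
    have eq: "(\<Sum>j\<in>S. smult (a j) (g j)) = (\<Sum>j\<in>S'. smult (a j + a j1 * c j) (g j))"
      unfolding S'_def using fin j1 c by (rule sum_smult_eliminate)
    have "card S' < card S"
      unfolding S'_def using fin j1 by (rule card_Diff1_less)
    then have "order 0 (\<Sum>j\<in>S'. smult (a j + a j1 * c j) (g j))
        \<le> Max ((\<lambda>j. \<alpha> j + (card {i\<in>S'. j \<le> i} choose 2)) ` S')"
      using fin deg nonzero eq by (intro less.hyps) (auto simp: S'_def)
    also have "\<dots> \<le> Max ((\<lambda>j. \<alpha> j + (card {i\<in>S. j \<le> i} choose 2)) ` S)"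
    proof (rule Max_tail_choose_2_mono)
      show "S' \<noteq> {}"
        using nonzero eq by auto
    qed (use fin in \<open>auto simp: S'_def\<close>)
    finally show ?thesis by (simp add: eq)
  qed
qed

theorem theorem5p2:
  fixes a :: "nat \<Rightarrow> 'a::field"
    and \<alpha> \<beta> :: "nat \<Rightarrow> nat"
    and k :: nat
  assumes char_pos: "CHAR('a) > 0"
    and alpha_mono: "\<And>i j. 1 \<le> i \<Longrightarrow> i \<le> j \<Longrightarrow> j \<le> k \<Longrightarrow> \<alpha> i \<le> \<alpha> j"
    and char_big: "\<And>j. j \<in> {1..k} \<Longrightarrow> \<alpha> j + \<beta> j < CHAR('a)"
    and P_nz: "(\<Sum>j=1..k. smult (a j) (monom 1 (\<alpha> j) * [:1, 1:] ^ (\<beta> j))) \<noteq> 0"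
  shows "val (\<Sum>j=1..k. smult (a j) (monom 1 (\<alpha> j) * [:1, 1:] ^ (\<beta> j)))
           \<le> Max ((\<lambda>j. \<alpha> j + ((k + 1 - j) choose 2)) ` {1..k})"
proof -
  have "val (\<Sum>j=1..k. smult (a j) (monom 1 (\<alpha> j) * [:1, 1:] ^ (\<beta> j)))
      = order 0 (\<Sum>j=1..k. smult (a j) (monom 1 (\<alpha> j) * [:1, 1:] ^ (\<beta> j)))"
    by (rule val_eq_order0[OF P_nz])
  also have "\<dots> \<le> Max ((\<lambda>j. \<alpha> j + (card {i\<in>{1..k}. j \<le> i} choose 2)) ` {1..k})"
    using char_big P_nz by (intro order0_sum_le_Max) auto
  also have "(\<lambda>j. \<alpha> j + (card {i\<in>{1..k}. j \<le> i} choose 2)) ` {1..k}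
      = (\<lambda>j. \<alpha> j + ((k + 1 - j) choose 2)) ` {1..k}"
  proof (rule image_cong[OF refl])
    fix j assume "j \<in> {1..k}"
    then have "{i\<in>{1..k}. j \<le> i} = {j..k}" by auto
    then show "\<alpha> j + (card {i\<in>{1..k}. j \<le> i} choose 2) = \<alpha> j + ((k + 1 - j) choose 2)" by simp
  qed
  finally show ?thesis .
qed

end
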